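(* Assume that $\mathbf{w} \in V_u(\omega_i) \times V_{\theta}(\omega_i)$, $\partial_n \mathbf{w} = 0$ on $\partial \omega_i$, and $|||\mathbf{w}|||_{s,\omega_i} < \infty$. For $0\leq t \leq s$, there holds \[ |||\mathbf{w}-\mathcal{I}_{L_i}^{\omega_i} \mathbf{w}|||_{t,\omega_i}^2 \leq \left( \frac{\Lambda_{L_i+1}^{\omega_i}}{H^2} \right)^{t-s} |||\mathbf{w}|||_{s,\omega_i}^2, \] where $\mathcal{I}_{L_i}^{\omega_i}$ is the local interpolation operator defined by \[ \mathcal{I}_{L_i}^{\omega_i} \mathbf{w} = \sum_{l=1}^{L_i} \mathcal{M}^{\omega_i}(\mathbf{w},\psi_l^{\omega_i}) \psi_l^{\omega_i}. \]
   Context: Setting: coupled thermomechanical problem on $\Omega\subset\mathbb{R}^d$ with Lamé coefficients $\lambda,\mu$, thermal conductivity $\kappa$, thermal expansion $\beta$; $V_u$, $V_\theta$ are $H^1$-type spaces for displacement and temperature. $\mathcal{T}^H$ is a coarse mesh of size $H$ with vertices $x_i$ and coarse neighborhoods $\omega_i$ (union of coarse elements containing $x_i$). For $\mathbf{w}=(\mathbf{u},\theta)$, $\mathbf{v}=(\mathbf{v}_u,v_\theta)$ the local bilinear forms are $\mathcal{A}^{\omega_i}(\mathbf{w},\mathbf{v}) = a^{\omega_i}(\mathbf{u},\mathbf{v}_u) - \gamma_1 b^{\omega_i}(\mathbf{v}_u,\theta) + \gamma_2 b^{\omega_i}(\mathbf{u},v_\theta) + d^{\omega_i}(\theta,v_\theta)$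 with $a^{\omega_i}(\mathbf{u},\mathbf{v})=\int_{\omega_i}\boldsymbol\sigma(\mathbf{u}):\boldsymbol\epsilon(\mathbf{v})$, $b^{\omega_i}(\mathbf{v},\theta)=\int_{\omega_i}\beta\theta\nabla\cdot\mathbf{v}$, $d^{\omega_i}(\theta,v)=\int_{\omega_i}\kappa\nabla\theta\cdot\nabla v$, and $\mathcal{M}^{\omega_i}(\mathbf{w},\mathbf{v})=\int_{\omega_i}(\lambda+2\mu)\mathbf{u}\cdot\mathbf{v}_u+\kappa\theta v_\theta$; $\gamma_1,\gamma_2$ are relaxation coefficients. The local coupled eigenproblem is $\mathcal{A}^{\omega_i}(\psi^{\omega_i},\mathbf{v}) = H^{-2}\Lambda^{\omega_i}\mathcal{M}^{\omega_i}(\psi^{\omega_i},\mathbf{v})$ for all $\mathbf{v}$, with eigenvalues assumed real, positive and ordered $\Lambda_1^{\omega_i}\le\Lambda_2^{\omega_i}\le\cdots$, and eigenfunctions $\{\psi_l^{\omega_i}\}$ assumed to form a complete $\mathcal{M}^{\omega_i}$-orthonormal basis of $\widetilde V(\omega_i)=\{\mathbf{v}\in V_u(\omega_i)\times V_\theta(\omega_i):\int_{\omega_i}\mathbf{v}=0\}$. The seminorm is $|||\mathbf{v}|||_{s,\omega_i}^2 = \sum_{l=1}^\infty (\Lambda_l^{\omega_i}/H^2)^s\,\mathcal{M}^{\omega_i}(\mathbf{v},\psi_l^{\omega_i})^2$, so that $|||\mathbf{v}|||_{0,\omega_i}^2=\mathcal{M}^{\omega_i}(\mathbf{v},\mathbf{v})$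 and $|||\mathbf{v}|||_{1,\omega_i}^2=\mathcal{A}^{\omega_i}(\mathbf{v},\mathbf{v})$. *)

theory Defs
  imports "HOL-Analysis.Analysis"
begin

text \<open>Elements w = (u, theta) live in a real vector space 'v; W plays the role of
  V_u(omega_i) x V_theta(omega_i), Vt the mean-zero subspace.  Eigenpairs are indexed
  from 1 (index 0 is unused).\<close>

definition interp :: "('v::real_vector \<Rightarrow> 'v \<Rightarrow> real) \<Rightarrow> (nat \<Rightarrow> 'v) \<Rightarrow> nat \<Rightarrow> 'v \<Rightarrow> 'v" where
  "interp M \<psi> L w = (\<Sum>l = 1..L. M w (\<psi> l) *\<^sub>R \<psi> l)"

definition tnorm_sq :: "('v \<Rightarrow> 'v \<Rightarrow> real) \<Rightarrow> (nat \<Rightarrow> real) \<Rightarrow> (nat \<Rightarrow> 'v) \<Rightarrow> real \<Rightarrow> real \<Rightarrow> 'v \<Rightarrow> real" where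
  "tnorm_sq M \<Lambda> \<psi> H s w = (\<Sum>l. (\<Lambda> (Suc l) / H\<^sup>2) powr s * (M w (\<psi> (Suc l)))\<^sup>2)"

definition tnorm_finite :: "('v \<Rightarrow> 'v \<Rightarrow> real) \<Rightarrow> (nat \<Rightarrow> real) \<Rightarrow> (nat \<Rightarrow> 'v) \<Rightarrow> real \<Rightarrow> real \<Rightarrow> 'v \<Rightarrow> bool" where
  "tnorm_finite M \<Lambda> \<psi> H s w = summable (\<lambda>l. (\<Lambda> (Suc l) / H\<^sup>2) powr s * (M w (\<psi> (Suc l)))\<^sup>2)"

end

theory Submission
  imports Defs
begin

(* Since the psi_l are M-orthonormal, the interpolant reproduces the first L coefficients of w,
   so the remainder w - I_L w has the coefficients of w from index L+1 on and zero before.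
   On these indices Lambda_l / H^2 >= Lambda_(L+1) / H^2, hence, as t <= s, the weight
   (Lambda_l / H^2)^t is at most (Lambda_(L+1) / H^2)^(t-s) (Lambda_l / H^2)^s;
   summing termwise gives the estimate. *)

locale orthonormal_system =
  fixes W :: "'v::real_vector set" and M :: "'v \<Rightarrow> 'v \<Rightarrow> real" and \<psi> :: "nat \<Rightarrow> 'v"
  assumes subspace_W: "subspace W"
    and M_add_left: "\<And>x y z. x \<in> W \<Longrightarrow> y \<in> W \<Longrightarrow> z \<in> W \<Longrightarrow> M (x + y) z = M x z + M y z"
    and M_scale_left: "\<And>c x z. x \<in> W \<Longrightarrow> z \<in> W \<Longrightarrow> M (c *\<^sub>R x) z = c * M x z"
    and \<psi>_mem: "\<And>l. l \<ge> 1 \<Longrightarrow> \<psi> l \<in> W"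
    and orthonormal: "\<And>k l. k \<ge> 1 \<Longrightarrow> l \<ge> 1 \<Longrightarrow> M (\<psi> k) (\<psi> l) = (if k = l then 1 else 0)"
begin

lemma M_diff_left:
  assumes "x \<in> W" "y \<in> W" "z \<in> W"
  shows "M (x - y) z = M x z - M y z"
proof -
  have "(-1::real) *\<^sub>R y \<in> W" using subspace_scale[OF subspace_W \<open>y \<in> W\<close>] .
  then have "M (x + (-1::real) *\<^sub>R y) z = M x z + M ((-1::real) *\<^sub>R y) z"
    using M_add_left assms by blast
  then show ?thesis using M_scale_left[OF \<open>y \<in> W\<close> \<open>z \<in> W\<close>, of "-1"] by simp
qed

lemma combination_mem:
  assumes "S \<subseteq> {1..}"
  shows "(\<Sum>l\<in>S. c l *\<^sub>R \<psi> l) \<in> W"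
  using assms by (intro subspace_sum[OF subspace_W] subspace_scale[OF subspace_W] \<psi>_mem) auto

lemma M_combination_left:
  assumes "finite S" "S \<subseteq> {1..}" "z \<in> W"
  shows "M (\<Sum>l\<in>S. c l *\<^sub>R \<psi> l) z = (\<Sum>l\<in>S. c l * M (\<psi> l) z)"
  using assms
proof (induction S rule: finite_induct)
  case empty
  have "M ((0::real) *\<^sub>R 0) z = 0 * M 0 z"
    using M_scale_left[OF subspace_0[OF subspace_W] \<open>z \<in> W\<close>] .
  then show ?case by simp
next
  case (insert k S)
  then have "k \<ge> 1" "S \<subseteq> {1..}" by auto
  have "M (c k *\<^sub>R \<psi> k + (\<Sum>l\<in>S. c l *\<^sub>R \<psi> l)) z
      = M (c k *\<^sub>R \<psi> k) z + M (\<Sum>l\<in>S. c l *\<^sub>R \<psi> l) z"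
    using M_add_left subspace_scale[OF subspace_W \<psi>_mem[OF \<open>k \<ge> 1\<close>]]
      combination_mem[OF \<open>S \<subseteq> {1..}\<close>] \<open>z \<in> W\<close> by blast
  then show ?case
    using insert M_scale_left[OF \<psi>_mem[OF \<open>k \<ge> 1\<close>] \<open>z \<in> W\<close>] by auto
qed

lemma interp_mem: "interp M \<psi> L w \<in> W"
  unfolding interp_def by (rule combination_mem) auto

lemma M_interp_left:
  assumes "k \<ge> 1"
  shows "M (interp M \<psi> L w) (\<psi> k) = (if k \<le> L then M w (\<psi> k) else 0)"
proof -
  have "M (interp M \<psi> L w) (\<psi> k) = (\<Sum>l = 1..L. M w (\<psi> l) * M (\<psi> l) (\<psi> k))"
    unfolding interp_def using \<psi>_mem[OF assms] by (intro M_combination_left) auto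
  also have "\<dots> = (\<Sum>l = 1..L. if l = k then M w (\<psi> l) else 0)"
    using orthonormal assms by (intro sum.cong) auto
  also have "\<dots> = (if k \<le> L then M w (\<psi> k) else 0)"
    using assms by (simp add: sum.delta)
  finally show ?thesis .
qed

lemma M_interp_remainder_left:
  assumes "w \<in> W" "k \<ge> 1"
  shows "M (w - interp M \<psi> L w) (\<psi> k) = (if k \<le> L then 0 else M w (\<psi> k))"
  using M_diff_left[OF assms(1) interp_mem \<psi>_mem[OF assms(2)]] M_interp_left[OF assms(2)]
  by simp

end

lemma powr_le_powr_diff_mult_powr:
  fixes a b s t :: real
  assumes "0 < b" "b \<le> a" "t \<le> s"
  shows "a powr t \<le> b powr (t - s) * a powr s"
proof -
  have "a powr t = a powr (t - s) * a powr s"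
    using assms by (simp add: powr_add[symmetric])
  also have "\<dots> \<le> b powr (t - s) * a powr s"
    using powr_mono2'[of "t - s" b a] assms by (intro mult_right_mono) auto
  finally show ?thesis .
qed

lemma suminf_weighted_tail_le:
  fixes \<mu> c d :: "nat \<Rightarrow> real" and b s t :: real and L :: nat
  assumes summable: "summable (\<lambda>l. \<mu> l powr s * (c l)\<^sup>2)"
    and b_pos: "0 < b" and b_le: "\<And>l. L \<le> l \<Longrightarrow> b \<le> \<mu> l"
    and head: "\<And>l. l < L \<Longrightarrow> d l = 0" and tail: "\<And>l. L \<le> l \<Longrightarrow> d l = c l"
    and "t \<le> s"
  shows "(\<Sum>l. \<mu> l powr t * (d l)\<^sup>2) \<le> b powr (t - s) * (\<Sum>l. \<mu> l powr s * (c l)\<^sup>2)"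
proof -
  have termwise: "\<mu> l powr t * (d l)\<^sup>2 \<le> b powr (t - s) * (\<mu> l powr s * (c l)\<^sup>2)" for l
  proof (cases "l < L")
    case True
    then show ?thesis using head by simp
  next
    case False
    then have "\<mu> l powr t \<le> b powr (t - s) * \<mu> l powr s"
      using powr_le_powr_diff_mult_powr b_pos b_le \<open>t \<le> s\<close> by simp
    then show ?thesis
      using False tail by (simp add: mult.assoc[symmetric] mult_right_mono)
  qed
  have summable_bound: "summable (\<lambda>l. b powr (t - s) * (\<mu> l powr s * (c l)\<^sup>2))"
    using summable_mult[OF summable] .
  have "(\<Sum>l. \<mu> l powr t * (d l)\<^sup>2) \<le> (\<Sum>l. b powr (t - s) * (\<mu> l powr s * (c l)\<^sup>2))"
    using termwise summable_bound
    by (intro suminf_le summable_comparison_test[OF _ summable_bound]) auto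
  also have "\<dots> = b powr (t - s) * (\<Sum>l. \<mu> l powr s * (c l)\<^sup>2)"
    using suminf_mult[OF summable] .
  finally show ?thesis .
qed

theorem mainTheorem1:
  fixes W Vt :: "'v::real_vector set"
    and M A :: "'v \<Rightarrow> 'v \<Rightarrow> real"
    and \<psi> :: "nat \<Rightarrow> 'v" and \<Lambda> :: "nat \<Rightarrow> real"
    and H s t :: real and L :: nat and w :: 'v
    and neumann :: "'v \<Rightarrow> bool"
  assumes W_sub: "subspace W" and Vt_sub: "subspace Vt" and Vt_W: "Vt \<subseteq> W"
    and M_add: "\<And>x y z. x \<in> W \<Longrightarrow> y \<in> W \<Longrightarrow> z \<in> W \<Longrightarrow> M (x + y) z = M x z + M y z"
    and M_scale: "\<And>c x z. x \<in> W \<Longrightarrow> z \<in> W \<Longrightarrow> M (c *\<^sub>R x) z = c * M x z"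
    and M_sym: "\<And>x y. x \<in> W \<Longrightarrow> y \<in> W \<Longrightarrow> M x y = M y x"
    and M_pos: "\<And>x. x \<in> W \<Longrightarrow> M x x \<ge> 0"
    and A_add: "\<And>x y z. x \<in> W \<Longrightarrow> y \<in> W \<Longrightarrow> z \<in> W \<Longrightarrow> A (x + y) z = A x z + A y z \<and> A z (x + y) = A z x + A z y"
    and A_scale: "\<And>c x z. x \<in> W \<Longrightarrow> z \<in> W \<Longrightarrow> A (c *\<^sub>R x) z = c * A x z \<and> A z (c *\<^sub>R x) = c * A z x"
    and H_pos: "H > 0"
    and eig_in: "\<And>l. l \<ge> 1 \<Longrightarrow> \<psi> l \<in> Vt"
    and eig_eq: "\<And>l v. l \<ge> 1 \<Longrightarrow> v \<in> Vt \<Longrightarrow> A (\<psi> l) v = (\<Lambda> l / H\<^sup>2) * M (\<psi> l) v"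
    and eig_pos: "\<And>l. l \<ge> 1 \<Longrightarrow> \<Lambda> l > 0"
    and eig_mono: "\<And>l. l \<ge> 1 \<Longrightarrow> \<Lambda> l \<le> \<Lambda> (Suc l)"
    and orthonormal: "\<And>k l. k \<ge> 1 \<Longrightarrow> l \<ge> 1 \<Longrightarrow> M (\<psi> k) (\<psi> l) = (if k = l then 1 else 0)"
    and complete: "\<And>v. v \<in> Vt \<Longrightarrow> (\<lambda>l. (M v (\<psi> (Suc l)))\<^sup>2) sums M v v"
    and w_in: "w \<in> W" and w_neumann: "neumann w"
    and w_fin: "tnorm_finite M \<Lambda> \<psi> H s w"
    and t_nonneg: "0 \<le> t" and t_le_s: "t \<le> s"
  shows "tnorm_sq M \<Lambda> \<psi> H t (w - interp M \<psi> L w)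
           \<le> (\<Lambda> (L + 1) / H\<^sup>2) powr (t - s) * tnorm_sq M \<Lambda> \<psi> H s w"
proof -
  interpret orthonormal_system W M \<psi>
    using W_sub M_add M_scale eig_in Vt_W orthonormal by unfold_locales auto
  have "\<Lambda> (Suc L) \<le> \<Lambda> (Suc l)" if "L \<le> l" for l
    using lift_Suc_mono_le[of "\<lambda>n. \<Lambda> (Suc n)"] eig_mono that by simp
  then have "\<Lambda> (L + 1) / H\<^sup>2 \<le> \<Lambda> (Suc l) / H\<^sup>2" if "L \<le> l" for l
    using that H_pos by (simp add: divide_right_mono)
  moreover have "0 < \<Lambda> (L + 1) / H\<^sup>2"
    using eig_pos[of "L + 1"] H_pos by simp
  ultimately show ?thesis
    using w_fin t_le_s M_interp_remainder_left[OF w_in]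
    unfolding tnorm_sq_def tnorm_finite_def
    by (intro suminf_weighted_tail_le[where L = L]) auto
qed

end
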